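(* Let $p\ge 3$ be an odd integer. Then the minimum number of copies of $B_p$ in a graph of order $p+2$ and size $\mathrm{ex}(p+2,B_p)+1$ is $3$, and the minimum number of copies of $B_p$ in a graph of order $p+3$ and size $\mathrm{ex}(p+3,B_p)+1$ is $3(p+1)$.
   Context: All graphs are finite and simple. The order of a graph is its number of vertices and its size is its number of edges. A copy of $H$ in $G$ is a subgraph of $G$ isomorphic to $H$; the number of copies of $H$ in $G$ is the number of distinct subgraphs of $G$ isomorphic to $H$. For a graph $H$ and a positive integer $n$, the Turán number $\mathrm{ex}(n,H)$ is the maximum size of a simple graph of order $n$ containing no copy of $H$. The book $B_p$ with $p$ pages is the graph consisting of $p$ triangles sharing a common edge (so $B_p$ has $p+2$ vertices and $2p+1$ edges). *)

theory Defs
  imports Main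
begin

definition simple_graph :: "'a set \<Rightarrow> 'a set set \<Rightarrow> bool" where
  "simple_graph V E \<longleftrightarrow> finite V \<and> E \<subseteq> {{u, v} | u v. u \<in> V \<and> v \<in> V \<and> u \<noteq> v}"

definition copies :: "'b set \<Rightarrow> 'b set set \<Rightarrow> 'a set \<Rightarrow> 'a set set \<Rightarrow> ('a set \<times> 'a set set) set" where
  "copies VH EH V E = {(W, F). W \<subseteq> V \<and> F \<subseteq> E \<and>
      (\<exists>f. bij_betw f VH W \<and> F = (\<lambda>e. f ` e) ` EH)}"

definition num_copies :: "'b set \<Rightarrow> 'b set set \<Rightarrow> 'a set \<Rightarrow> 'a set set \<Rightarrow> nat" where
  "num_copies VH EH V E = card (copies VH EH V E)"

definition turan_ex :: "nat \<Rightarrow> 'b set \<Rightarrow> 'b set set \<Rightarrow> nat" where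
  "turan_ex n VH EH = Max {card E | E. simple_graph {0..<n} E \<and> copies VH EH {0..<n} E = {}}"

definition min_copies :: "nat \<Rightarrow> nat \<Rightarrow> 'b set \<Rightarrow> 'b set set \<Rightarrow> nat" where
  "min_copies n m VH EH = Min {num_copies VH EH {0..<n} E | E. simple_graph {0..<n} E \<and> card E = m}"

text \<open>The book B_p: spine vertices 0 and 1, page vertices 2..p+1.\<close>
definition book_V :: "nat \<Rightarrow> nat set" where
  "book_V p = {0..<p+2}"

definition book_E :: "nat \<Rightarrow> nat set set" where
  "book_E p = insert {0, 1} (\<Union>i\<in>{2..<p+2}. {{0, i}, {1, i}})"

end

theory Submission
  imports Defs
begin

text \<open>A copy of \<open>B\<^sub>p\<close> is the same as a spine edge \<open>e\<close> together with a set \<open>S\<close> of \<open>p\<close> common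
  neighbours of its endpoints, so everything is governed by the complement \<open>M\<close> of the graph.
  Call a vertex universal if it meets no non-edge; then at least \<open>n - 2|M|\<close> vertices are universal.
  On \<open>p + 2\<close> vertices every book is spanning and its spine consists of two universal vertices,
  so there are exactly \<open>C(u, 2)\<close> books: this gives \<open>ex(p+2, B\<^sub>p) = C(p+2, 2) - (p+1)/2\<close>, and one
  more edge leaves three universal vertices and hence at least three books, which the complement
  of a matching with \<open>(p-1)/2\<close> edges attains.
  On \<open>p + 3\<close> vertices one edge more than the extremal number leaves \<open>(p+1)/2\<close> non-edges and so
  at least two universal vertices. With three of them the books on universal spines already number
  \<open>3(p+1)\<close>. With exactly two, \<open>a\<close> and \<open>b\<close>, the non-edges are a perfect matching of the remaining
  vertices and the books are the \<open>p + 1\<close> on the spine \<open>ab\<close> and, for each of \<open>a\<close>, \<open>b\<close> and each matched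
  vertex \<open>x\<close>, the single book on the spine \<open>{a, x}\<close> that omits the partner of \<open>x\<close>. The complement of
  a perfect matching has no book at all, which yields the Turan number.\<close>

definition all_edges :: "'a set \<Rightarrow> 'a set set" where
  "all_edges V = {{u, v} | u v. u \<in> V \<and> v \<in> V \<and> u \<noteq> v}"

text \<open>A book is recorded by its spine \<open>e\<close> and its set \<open>S\<close> of page vertices; \<open>book_graph\<close> is
  the subgraph it spans.\<close>

definition books :: "nat \<Rightarrow> 'a set \<Rightarrow> 'a set set \<Rightarrow> ('a set \<times> 'a set) set" where
  "books p V E = {(e, S). e \<in> E \<and> S \<subseteq> V - e \<and> card S = p \<and> (\<forall>s\<in>S. \<forall>u\<in>e. {u, s} \<in> E)}"

definition book_graph :: "'a set \<times> 'a set \<Rightarrow> 'a set \<times> 'a set set" where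
  "book_graph = (\<lambda>(e, S). (e \<union> S, insert e (\<Union>u\<in>e. \<Union>s\<in>S. {{u, s}})))"

lemma simple_graph_iff_all_edges: "simple_graph V E \<longleftrightarrow> finite V \<and> E \<subseteq> all_edges V"
  by (simp add: simple_graph_def all_edges_def)

lemma all_edges_eq: "all_edges V = {e. e \<subseteq> V \<and> card e = 2}"
  unfolding all_edges_def by (auto simp: card_2_iff)

lemma card_all_edges: "finite V \<Longrightarrow> card (all_edges V) = card V choose 2"
  by (simp add: all_edges_eq n_subsets)

lemma finite_all_edges: "finite V \<Longrightarrow> finite (all_edges V)"
  by (simp add: all_edges_eq)

lemma finite_books: "finite V \<Longrightarrow> E \<subseteq> all_edges V \<Longrightarrow> finite (books p V E)"
  by (rule finite_subset[of _ "all_edges V \<times> Pow V"]) (auto simp: books_def finite_all_edges)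

lemma copy_of_book_is_book_graph:
  assumes "(W, F) \<in> copies (book_V p) (book_E p) V E"
  shows "(W, F) \<in> book_graph ` books p V E"
proof -
  obtain f where W: "W \<subseteq> V" and FE: "F \<subseteq> E" and bij: "bij_betw f {0..<p+2} W"
    and F: "F = (\<lambda>e. f ` e) ` book_E p"
    using assms unfolding copies_def book_V_def by blast
  define e where "e = {f 0, f 1}"
  define S where "S = f ` {2..<p+2}"
  have inj: "inj_on f {0..<p+2}" and W_eq: "W = f ` {0..<p+2}"
    using bij by (auto simp: bij_betw_def)
  have F_eq: "F = insert e (\<Union>u\<in>e. \<Union>s\<in>S. {{u, s}})"
    unfolding F book_E_def e_def S_def by (auto simp: image_UN)
  have "f i \<noteq> f 0 \<and> f i \<noteq> f 1" if "i \<in> {2..<p+2}" for i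
    using inj_onD[OF inj, of i 0] inj_onD[OF inj, of i 1] that by auto
  then have eS: "e \<inter> S = {}"
    unfolding e_def S_def by force
  have "{0..<p+2} = {0, 1} \<union> {2..<p+2}" by auto
  then have We: "W = e \<union> S"
    unfolding W_eq e_def S_def by (simp add: image_Un)
  have "card S = p"
    unfolding S_def using inj by (subst card_image) (auto intro: inj_on_subset)
  moreover have "e \<in> E" "\<forall>s\<in>S. \<forall>u\<in>e. {u, s} \<in> E"
    using FE F_eq by auto
  moreover have "S \<subseteq> V - e"
    using W We eS by blast
  ultimately have "(e, S) \<in> books p V E"
    by (simp add: books_def)
  moreover have "(W, F) = book_graph (e, S)"
    using We F_eq by (simp add: book_graph_def)
  ultimately show ?thesis by blast
qed

lemma book_graph_is_copy:
  assumes "simple_graph V E" and "(e, S) \<in> books p V E"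
  shows "book_graph (e, S) \<in> copies (book_V p) (book_E p) V E"
proof -
  have eE: "e \<in> E" and SV: "S \<subseteq> V - e" and cS: "card S = p"
    and adj: "\<forall>s\<in>S. \<forall>u\<in>e. {u, s} \<in> E"
    using assms(2) by (auto simp: books_def)
  obtain u v where e: "e = {u, v}" and uv: "u \<in> V" "v \<in> V" "u \<noteq> v"
    using assms(1) eE by (auto simp: simple_graph_def)
  have "finite S" using SV assms(1) finite_subset by (auto simp: simple_graph_def)
  then obtain g where g: "bij_betw g {2..<p+2} S"
    using cS finite_same_card_bij[of "{2..<p+2}" S] by auto
  define f where "f i = (if i = 0 then u else if i = 1 then v else g i)" for i
  have "bij_betw f ({0, 1} \<union> {2..<p+2}) ({u, v} \<union> S)"
  proof (rule bij_betw_combine)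
    show "bij_betw f {0, 1} {u, v}" using uv(3) by (auto simp: bij_betw_def f_def inj_on_def)
    show "bij_betw f {2..<p+2} S" using g by (rule bij_betw_cong[THEN iffD1, rotated]) (auto simp: f_def)
    show "{u, v} \<inter> S = {}" using SV e by auto
  qed
  moreover have "{0, 1} \<union> {2..<p+2} = book_V p" by (auto simp: book_V_def)
  ultimately have bij: "bij_betw f (book_V p) (e \<union> S)" using e by simp
  have gS: "g ` {2..<p+2} = S" using g by (simp add: bij_betw_def)
  have "(\<lambda>e. f ` e) ` book_E p = insert e (\<Union>i\<in>{2..<p+2}. {{u, g i}, {v, g i}})"
    unfolding book_E_def e by (auto simp: image_UN f_def)
  also have "\<dots> = insert e (\<Union>w\<in>e. \<Union>s\<in>S. {{w, s}})"
    unfolding e gS[symmetric] by auto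
  finally have F: "(\<lambda>e. f ` e) ` book_E p = insert e (\<Union>w\<in>e. \<Union>s\<in>S. {{w, s}})" .
  have sub: "e \<union> S \<subseteq> V" "insert e (\<Union>w\<in>e. \<Union>s\<in>S. {{w, s}}) \<subseteq> E"
    using SV e uv eE adj by auto
  show ?thesis
    unfolding copies_def book_graph_def using bij sub F[symmetric] by (auto intro!: exI[of _ f])
qed

text \<open>With at least two pages, the spine is recovered from a book graph as the set of its
  vertices adjacent to all others; this makes \<open>book_graph\<close> injective.\<close>

lemma book_spine_eq_dominating:
  assumes "e \<inter> S = {}" "2 \<le> card S" "card e = 2"
  shows "e = {x \<in> e \<union> S. \<forall>y\<in>(e \<union> S) - {x}. {x, y} \<in> insert e (\<Union>w\<in>e. \<Union>s\<in>S. {{w, s}})}"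
    (is "e = ?D")
proof
  obtain u v where e: "e = {u, v}" "u \<noteq> v" using assms(3) by (auto simp: card_2_iff)
  show "e \<subseteq> ?D" using e by (auto simp: insert_commute)
  show "?D \<subseteq> e"
  proof
    fix x assume x: "x \<in> ?D"
    show "x \<in> e"
    proof (rule ccontr)
      assume "x \<notin> e"
      then have xS: "x \<in> S" using x by auto
      have "\<not> S \<subseteq> {x}"
        using assms(2) card_mono[of "{x}" S] by fastforce
      then obtain t where t: "t \<in> S" "t \<noteq> x" by blast
      then have "{x, t} \<in> insert e (\<Union>w\<in>e. \<Union>s\<in>S. {{w, s}})" using x by auto
      then show False using assms(1) xS t e by (auto simp: doubleton_eq_iff)
    qed
  qed
qed

lemma inj_on_book_graph:
  assumes "E \<subseteq> all_edges V" "2 \<le> p"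
  shows "inj_on book_graph (books p V E)"
proof (rule inj_onI)
  fix a b assume a: "a \<in> books p V E" and b: "b \<in> books p V E" and ab: "book_graph a = book_graph b"
  obtain e S e' S' where ab': "a = (e, S)" "b = (e', S')" by (cases a, cases b)
  have e: "card e = 2" "e \<inter> S = {}" "2 \<le> card S"
    using a ab' assms by (auto simp: books_def all_edges_eq)
  have e': "card e' = 2" "e' \<inter> S' = {}" "2 \<le> card S'"
    using b ab' assms by (auto simp: books_def all_edges_eq)
  have W: "e \<union> S = e' \<union> S'"
    and F: "insert e (\<Union>w\<in>e. \<Union>s\<in>S. {{w, s}}) = insert e' (\<Union>w\<in>e'. \<Union>s\<in>S'. {{w, s}})"
    using ab ab' by (auto simp: book_graph_def)
  have "e = e'"
    using book_spine_eq_dominating[OF e(2,3,1)] book_spine_eq_dominating[OF e'(2,3,1)] W F by simp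
  moreover have "S = S'" using W e(2) e'(2) \<open>e = e'\<close> by blast
  ultimately show "a = b" using ab' by simp
qed

lemma copies_book_eq:
  assumes "simple_graph V E"
  shows "copies (book_V p) (book_E p) V E = book_graph ` books p V E"
proof (intro equalityI subsetI)
  fix x assume "x \<in> copies (book_V p) (book_E p) V E"
  then show "x \<in> book_graph ` books p V E"
    using copy_of_book_is_book_graph by (cases x) blast
next
  fix x assume "x \<in> book_graph ` books p V E"
  then show "x \<in> copies (book_V p) (book_E p) V E"
    using book_graph_is_copy[OF assms] by auto
qed

lemma num_copies_book_eq_card_books:
  assumes "simple_graph V E" "2 \<le> p"
  shows "num_copies (book_V p) (book_E p) V E = card (books p V E)"
  using assms inj_on_book_graph[of E V p]
  by (simp add: num_copies_def copies_book_eq card_image simple_graph_iff_all_edges)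

definition universal :: "'a set \<Rightarrow> 'a set set \<Rightarrow> 'a set" where
  "universal V E = {u \<in> V. \<forall>v\<in>V - {u}. {u, v} \<in> E}"

definition universal_books :: "nat \<Rightarrow> 'a set \<Rightarrow> 'a set set \<Rightarrow> ('a set \<times> 'a set) set" where
  "universal_books p V E =
     Sigma {e. e \<subseteq> universal V E \<and> card e = 2} (\<lambda>e. {S. S \<subseteq> V - e \<and> card S = p})"

lemma universal_eq_uncovered: "universal V E = V - \<Union>(all_edges V - E)"
proof (intro equalityI subsetI)
  fix u assume u: "u \<in> universal V E"
  have "u \<notin> m" if "m \<in> all_edges V - E" for m
    using that u by (auto simp: all_edges_def universal_def insert_commute)
  then show "u \<in> V - \<Union>(all_edges V - E)" using u by (auto simp: universal_def)
next
  fix u assume u: "u \<in> V - \<Union>(all_edges V - E)"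
  have "{u, v} \<in> E" if "v \<in> V - {u}" for v
    using u that unfolding all_edges_def by blast
  then show "u \<in> universal V E" using u by (simp add: universal_def)
qed

lemma card_Union_non_edges_le: "card (\<Union>(all_edges V - E)) \<le> 2 * card (all_edges V - E)"
proof -
  have "card (\<Union>(all_edges V - E)) \<le> (\<Sum>m\<in>all_edges V - E. card m)" by (rule card_Union_le_sum_card)
  also have "\<dots> = 2 * card (all_edges V - E)" by (simp add: all_edges_eq)
  finally show ?thesis .
qed

lemma card_universal:
  assumes "finite V"
  shows "card (universal V E) = card V - card (\<Union>(all_edges V - E))"
proof -
  have "\<Union>(all_edges V - E) \<subseteq> V" by (auto simp: all_edges_def)
  then show ?thesis using assms by (simp add: universal_eq_uncovered card_Diff_subset finite_subset)
qed

lemma card_universal_ge: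
  assumes "finite V"
  shows "card V \<le> card (universal V E) + 2 * card (all_edges V - E)"
  using card_universal[OF assms, of E] card_Union_non_edges_le[of V E] by linarith

lemma universal_books_subset: "universal_books p V E \<subseteq> books p V E"
proof safe
  fix e S assume "(e, S) \<in> universal_books p V E"
  then have eU: "e \<subseteq> universal V E" and ce: "card e = 2" and SV: "S \<subseteq> V - e" and "card S = p"
    by (auto simp: universal_books_def)
  obtain a b where e: "e = {a, b}" "a \<noteq> b" using ce by (auto simp: card_2_iff)
  have adj: "{u, v} \<in> E" if "u \<in> e" "v \<in> V" "v \<noteq> u" for u v
    using eU that by (auto simp: universal_def)
  then have "e \<in> E" using e eU by (auto simp: universal_def)
  moreover have "\<forall>s\<in>S. \<forall>u\<in>e. {u, s} \<in> E" using adj SV by blast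
  ultimately show "(e, S) \<in> books p V E"
    using SV \<open>card S = p\<close> by (simp add: books_def)
qed

lemma card_universal_books:
  assumes "finite V"
  shows "card (universal_books p V E) = (card (universal V E) choose 2) * (card V - 2 choose p)"
proof -
  have UV: "universal V E \<subseteq> V" by (auto simp: universal_def)
  have "card {S. S \<subseteq> V - e \<and> card S = p} = card V - 2 choose p"
    if "e \<subseteq> universal V E" "card e = 2" for e
    using that UV assms by (simp add: n_subsets card_Diff_subset finite_subset)
  then have "card (universal_books p V E) = (\<Sum>e\<in>{e. e \<subseteq> universal V E \<and> card e = 2}. card V - 2 choose p)"
    unfolding universal_books_def using assms UV
    by (subst card_SigmaI) (auto intro!: sum.cong finite_subset[of _ "Pow V"])
  also have "\<dots> = (card (universal V E) choose 2) * (card V - 2 choose p)"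
    using assms UV by (simp add: n_subsets finite_subset)
  finally show ?thesis .
qed

lemma non_neighbour_outside_book:
  assumes "E \<subseteq> all_edges V" "(e, S) \<in> books p V E" "u \<in> e" "y \<noteq> u" "{u, y} \<notin> E"
  shows "y \<notin> e \<union> S"
proof -
  have eE: "e \<in> E" and adj: "\<forall>s\<in>S. \<forall>w\<in>e. {w, s} \<in> E"
    using assms(2) by (auto simp: books_def)
  obtain a b where "e = {a, b}" using eE assms(1) by (auto simp: all_edges_def)
  then have "y \<in> e \<Longrightarrow> e = {u, y}" using assms(3,4) by auto
  then show ?thesis using assms(3,5) eE adj by (auto simp: insert_commute)
qed

lemma books_spanning:
  assumes "finite V" "E \<subseteq> all_edges V" "card V = p + 2"
  shows "books p V E = universal_books p V E"
proof
  show "universal_books p V E \<subseteq> books p V E" by (rule universal_books_subset)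
  show "books p V E \<subseteq> universal_books p V E"
  proof safe
    fix e S assume book: "(e, S) \<in> books p V E"
    then have SV: "S \<subseteq> V - e" and cS: "card S = p" and "e \<in> all_edges V"
      using assms(2) by (auto simp: books_def)
    then have eV: "e \<subseteq> V" and ce: "card e = 2" by (auto simp: all_edges_eq)
    have S: "S = V - e"
      using SV cS assms ce eV by (intro card_subset_eq) (auto simp: card_Diff_subset finite_subset)
    have "e \<subseteq> universal V E"
      using non_neighbour_outside_book[OF assms(2) book] eV S by (auto simp: universal_def)
    then show "(e, S) \<in> universal_books p V E"
      using SV cS ce by (simp add: universal_books_def)
  qed
qed

lemma card_books_spanning:
  assumes "finite V" "E \<subseteq> all_edges V" "card V = p + 2"
  shows "card (books p V E) = card (universal V E) choose 2"
  using assms by (simp add: books_spanning card_universal_books)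

lemma book_pages_eq:
  assumes "finite V" "E \<subseteq> all_edges V" "card V = p + 3" "(e, S) \<in> books p V E"
    and "e = {w, x}" "y \<in> V" "y \<noteq> x" "{x, y} \<notin> E"
  shows "S = V - {w, x, y}"
proof -
  have SV: "S \<subseteq> V - e" and cS: "card S = p" and "e \<in> all_edges V"
    using assms(2,4) by (auto simp: books_def)
  then have eV: "e \<subseteq> V" and "w \<noteq> x" using assms(5) by (auto simp: all_edges_def doubleton_eq_iff)
  have y: "y \<notin> e \<union> S" using non_neighbour_outside_book[OF assms(2,4), of x y] assms(5,7,8) by simp
  then have "card {w, x, y} = 3" using \<open>w \<noteq> x\<close> assms(5) by auto
  then have "card (V - {w, x, y}) = p" using assms(1,3,5,6) eV by (simp add: card_Diff_subset)
  moreover have "S \<subseteq> V - {w, x, y}" using SV y assms(5) by auto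
  ultimately show ?thesis using assms(1) cS card_subset_eq[of "V - {w, x, y}" S] by simp
qed

text \<open>If the non-edges form a matching, a graph of order \<open>p + 3\<close> has no book whose spine
  avoids the universal vertices: both spine vertices would have to miss the single vertex
  outside the book, which would then be matched twice.\<close>

lemma book_spine_meets_universal:
  assumes "finite V" "E \<subseteq> all_edges V" "card V = p + 3"
    and matching: "pairwise disjnt (all_edges V - E)" and book: "(e, S) \<in> books p V E"
  shows "e \<inter> universal V E \<noteq> {}"
proof
  assume none: "e \<inter> universal V E = {}"
  obtain u v where e: "e = {u, v}" "u \<in> V" "v \<in> V" "u \<noteq> v"
    using book assms(2) by (auto simp: books_def all_edges_def)
  obtain y z where y: "y \<in> V" "y \<noteq> u" "{u, y} \<notin> E" and z: "z \<in> V" "z \<noteq> v" "{v, z} \<notin> E"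
    using none e by (auto simp: universal_def)
  have "u \<in> e" "v \<in> e" using e(1) by auto
  have out: "y \<notin> e \<union> S" "z \<notin> e \<union> S"
    using non_neighbour_outside_book[OF assms(2) book \<open>u \<in> e\<close> y(2,3)]
      non_neighbour_outside_book[OF assms(2) book \<open>v \<in> e\<close> z(2,3)] .
  have "e = {v, u}" using e(1) by (simp add: insert_commute)
  from book_pages_eq[OF assms(1-3) book this y] have "S = V - {v, u, y}" .
  then have "z \<in> {v, u, y}" using z(1) out(2) by blast
  then have "y = z" using out(2) e(1) by blast
  have "{u, y} \<in> all_edges V - E" "{v, y} \<in> all_edges V - E"
    using e y z \<open>y = z\<close> by (auto simp: all_edges_def)
  moreover have "{u, y} \<noteq> {v, y}" using e(4) out by (auto simp: doubleton_eq_iff)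
  ultimately have "disjnt {u, y} {v, y}" using pairwiseD[OF matching] by blast
  then show False by (simp add: disjnt_def)
qed

lemma book_through_matched_vertex:
  assumes "finite V" "card V = p + 3" and matching: "pairwise disjnt (all_edges V - E)"
    and w: "w \<in> universal V E" and xy: "{x, y} \<in> all_edges V - E"
  shows "({w, x}, V - {w, x, y}) \<in> books p V E"
proof -
  have xy': "x \<in> V" "y \<in> V" "x \<noteq> y" using xy by (auto simp: all_edges_def doubleton_eq_iff)
  have "x \<notin> universal V E" "y \<notin> universal V E"
    using xy by (auto simp: universal_eq_uncovered)
  then have wV: "w \<in> V" "w \<noteq> x" "w \<noteq> y" using w by (auto simp: universal_def)
  have wE: "{w, s} \<in> E" if "s \<in> V" "s \<noteq> w" for s using w that by (auto simp: universal_def)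
  have xE: "{x, s} \<in> E" if "s \<in> V - {w, x, y}" for s
  proof (rule ccontr)
    assume "{x, s} \<notin> E"
    then have "{x, s} \<in> all_edges V - E" using that xy' by (auto simp: all_edges_def)
    moreover have "{x, s} \<noteq> {x, y}" using that by (auto simp: doubleton_eq_iff)
    ultimately have "disjnt {x, s} {x, y}" using pairwiseD[OF matching _ xy] by blast
    then show False by (simp add: disjnt_def)
  qed
  have "card (V - {w, x, y}) = p" using assms(1,2) xy' wV by (simp add: card_Diff_subset)
  moreover have "{w, x} \<in> E" using wE xy' wV by simp
  moreover have "\<forall>s\<in>V - {w, x, y}. \<forall>u\<in>{w, x}. {u, s} \<in> E"
    using wE xE by auto
  ultimately show ?thesis by (auto simp: books_def)
qed

lemma books_matching_complement_eq:
  assumes "finite V" "E \<subseteq> all_edges V" "card V = p + 3"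
    and matching: "pairwise disjnt (all_edges V - E)"
    and partner: "\<And>x. x \<in> V - universal V E \<Longrightarrow> {x, partner x} \<in> all_edges V - E"
  shows "books p V E = universal_books p V E \<union>
    (\<Union>w\<in>universal V E. (\<lambda>x. ({w, x}, V - {w, x, partner x})) ` (V - universal V E))"
    (is "_ = _ \<union> ?B")
proof
  show "universal_books p V E \<union> ?B \<subseteq> books p V E"
    using universal_books_subset book_through_matched_vertex[OF assms(1,3,4)] partner by blast
  show "books p V E \<subseteq> universal_books p V E \<union> ?B"
  proof
    fix z assume "z \<in> books p V E"
    then obtain e S where z: "z = (e, S)" and book: "(e, S) \<in> books p V E" by (cases z) auto
    then have S: "S \<subseteq> V - e" "card S = p" and "e \<in> all_edges V"
      using assms(2) by (auto simp: books_def)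
    show "z \<in> universal_books p V E \<union> ?B"
    proof (cases "e \<subseteq> universal V E")
      case True
      then show ?thesis using z S \<open>e \<in> all_edges V\<close> by (simp add: universal_books_def all_edges_eq)
    next
      case False
      obtain w where w: "w \<in> e" "w \<in> universal V E"
        using book_spine_meets_universal[OF assms(1-4) book] by blast
      with False obtain x where e: "e = {w, x}" "x \<in> V - universal V E"
        using \<open>e \<in> all_edges V\<close> by (auto simp: all_edges_def)
      have "partner x \<in> V" "partner x \<noteq> x" "{x, partner x} \<notin> E"
        using partner[OF e(2)] by (auto simp: all_edges_def doubleton_eq_iff)
      then have "S = V - {w, x, partner x}" by (rule book_pages_eq[OF assms(1-3) book e(1)])
      then show ?thesis using z e w by blast
    qed
  qed
qed

lemma card_books_matching_complement:
  assumes "finite V" "E \<subseteq> all_edges V" "card V = p + 3"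
    and matching: "pairwise disjnt (all_edges V - E)"
  shows "card (books p V E) =
    (card (universal V E) choose 2) * (p + 1) + card (universal V E) * (card V - card (universal V E))"
proof -
  let ?U = "universal V E"
  have "\<exists>y. {x, y} \<in> all_edges V - E" if x: "x \<in> V - ?U" for x
  proof -
    obtain y where "y \<in> V" "y \<noteq> x" "{x, y} \<notin> E" using x by (auto simp: universal_def)
    then show ?thesis using x by (auto simp: all_edges_def)
  qed
  then obtain partner where partner: "\<And>x. x \<in> V - ?U \<Longrightarrow> {x, partner x} \<in> all_edges V - E"
    by metis
  define page where "page w x = ({w, x}, V - {w, x, partner x})" for w x
  have UV: "?U \<subseteq> V" by (auto simp: universal_def)
  have fin: "finite ?U" "finite (V - ?U)" using assms(1) UV finite_subset by auto
  have card_page: "card (page w ` (V - ?U)) = card V - card ?U" if "w \<in> ?U" for w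
  proof -
    have "inj_on (page w) (V - ?U)"
      using that by (auto simp: inj_on_def page_def doubleton_eq_iff)
    then show ?thesis using assms(1) UV by (simp add: card_image card_Diff_subset finite_subset)
  qed
  have disj: "page w ` (V - ?U) \<inter> page w' ` (V - ?U) = {}" if "w \<in> ?U" "w' \<in> ?U" "w \<noteq> w'" for w w'
    using that by (auto simp: page_def doubleton_eq_iff)
  have "card (\<Union>w\<in>?U. page w ` (V - ?U)) = (\<Sum>w\<in>?U. card V - card ?U)"
    using fin disj card_page by (subst card_UN_disjoint) auto
  moreover have "universal_books p V E \<inter> (\<Union>w\<in>?U. page w ` (V - ?U)) = {}"
    by (auto simp: universal_books_def page_def)
  moreover have "finite (universal_books p V E)" "finite (\<Union>w\<in>?U. page w ` (V - ?U))"
    using fin finite_books[OF assms(1,2)] finite_subset[OF universal_books_subset] by auto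
  moreover have "card (universal_books p V E) = (card ?U choose 2) * (p + 1)"
    using assms(1,3) by (simp add: card_universal_books)
  ultimately show ?thesis
    using books_matching_complement_eq[OF assms partner] by (simp add: page_def card_Un_disjoint)
qed

lemma pairwise_disjnt_if_card_Union_eq_sum:
  assumes "finite M" "\<And>A. A \<in> M \<Longrightarrow> finite A" "card (\<Union>M) = (\<Sum>A\<in>M. card A)"
  shows "pairwise disjnt M"
proof (rule pairwiseI, rule ccontr)
  fix A B assume AB: "A \<in> M" "B \<in> M" "A \<noteq> B" "\<not> disjnt A B"
  let ?R = "M - {A, B}"
  have "card (A \<union> B) < card A + card B"
    using AB assms(2) card_Un_Int[of A B] by (fastforce simp: disjnt_def)
  have "\<Union>M = (A \<union> B) \<union> \<Union>?R" using AB by blast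
  then have "card (\<Union>M) \<le> card (A \<union> B) + card (\<Union>?R)" by (metis card_Un_le)
  also have "card (\<Union>?R) \<le> (\<Sum>C\<in>?R. card C)" by (rule card_Union_le_sum_card)
  also have "card (A \<union> B) + (\<Sum>C\<in>?R. card C) < card A + card B + (\<Sum>C\<in>?R. card C)"
    using \<open>card (A \<union> B) < card A + card B\<close> by simp
  also have "\<dots> = (\<Sum>C\<in>M. card C)"
    using AB assms(1) sum.subset_diff[of "{A, B}" M card] by simp
  finally show False using assms(3) by simp
qed

lemma card_books_order_p3_ge:
  assumes "finite V" "E \<subseteq> all_edges V" "card V = p + 3"
    and "2 * card (all_edges V - E) + 2 \<le> card V"
  shows "3 * (p + 1) \<le> card (books p V E)"
proof (cases "3 \<le> card (universal V E)")
  case True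
  then have "3 choose 2 \<le> card (universal V E) choose 2" by (rule binomial_right_mono)
  then have "3 \<le> card (universal V E) choose 2" by (simp add: choose_two)
  then have "3 * (p + 1) \<le> (card (universal V E) choose 2) * (p + 1)" by (rule mult_right_mono) simp
  also have "\<dots> = (card (universal V E) choose 2) * (card V - 2 choose p)"
    using assms(3) by (simp add: numeral_3_eq_3)
  also have "\<dots> = card (universal_books p V E)" using assms(1) by (simp add: card_universal_books)
  also have "\<dots> \<le> card (books p V E)"
    using universal_books_subset finite_books[OF assms(1,2)] by (rule card_mono[rotated])
  finally show ?thesis .
next
  case False
  let ?M = "all_edges V - E"
  have "card (universal V E) = 2" "card (\<Union>?M) = 2 * card ?M"
    using False assms(4) card_universal[OF assms(1), of E] card_Union_non_edges_le[of V E] by linarith+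
  moreover have "pairwise disjnt ?M"
  proof (rule pairwise_disjnt_if_card_Union_eq_sum)
    show "finite ?M" using assms(1) by (simp add: finite_all_edges)
    show "finite A" if "A \<in> ?M" for A using that by (auto simp: all_edges_def)
    show "card (\<Union>?M) = (\<Sum>A\<in>?M. card A)" using \<open>card (\<Union>?M) = 2 * card ?M\<close> by (simp add: all_edges_eq)
  qed
  ultimately show ?thesis using card_books_matching_complement[OF assms(1-3)] assms(3) by simp
qed

definition consecutive_pairs :: "nat \<Rightarrow> nat \<Rightarrow> nat set set" where
  "consecutive_pairs a k = (\<lambda>i. {a + 2 * i, a + 2 * i + 1}) ` {..<k}"

lemma Union_consecutive_pairs: "\<Union>(consecutive_pairs a k) = {a..<a + 2 * k}"
proof (intro equalityI subsetI)
  fix x assume "x \<in> {a..<a + 2 * k}"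
  then have "(x - a) div 2 < k" "x = a + 2 * ((x - a) div 2) \<or> x = a + 2 * ((x - a) div 2) + 1"
    by auto
  then show "x \<in> \<Union>(consecutive_pairs a k)" unfolding consecutive_pairs_def by blast
qed (auto simp: consecutive_pairs_def)

lemma card_consecutive_pairs: "card (consecutive_pairs a k) = k"
proof -
  have "inj_on (\<lambda>i. {a + 2 * i, a + 2 * i + 1}) {..<k}"
    by (auto simp: inj_on_def doubleton_eq_iff; presburger)
  then show ?thesis by (simp add: consecutive_pairs_def card_image)
qed

lemma consecutive_pairs_subset: "a + 2 * k \<le> n \<Longrightarrow> consecutive_pairs a k \<subseteq> all_edges {0..<n}"
  unfolding consecutive_pairs_def all_edges_def by force

lemma pairwise_disjnt_consecutive_pairs: "pairwise disjnt (consecutive_pairs a k)"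
  unfolding consecutive_pairs_def pairwise_def disjnt_def by (auto; presburger)

lemma half_le_choose_two: "n div 2 \<le> n choose 2"
  using card_mono[OF finite_all_edges consecutive_pairs_subset[of 0 "n div 2" n]]
  by (simp add: card_consecutive_pairs card_all_edges)

lemma card_non_edges_add:
  assumes "finite V" "E \<subseteq> all_edges V"
  shows "card E + card (all_edges V - E) = card V choose 2"
  using assms card_Diff_subset[of E "all_edges V"] card_mono[of "all_edges V" E]
  by (simp add: card_all_edges finite_all_edges finite_subset)

lemma card_all_edges_diff:
  "finite V \<Longrightarrow> M \<subseteq> all_edges V \<Longrightarrow> card (all_edges V - M) = (card V choose 2) - card M"
  by (simp add: card_Diff_subset card_all_edges finite_all_edges finite_subset)

lemma universal_complement:
  "M \<subseteq> all_edges V \<Longrightarrow> universal V (all_edges V - M) = V - \<Union>M"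
  by (simp add: universal_eq_uncovered double_diff)

lemma turan_ex_book_eqI:
  assumes "\<And>E. E \<subseteq> all_edges {0..<n} \<Longrightarrow> books p {0..<n} E = {} \<Longrightarrow> card E \<le> T"
    and "E0 \<subseteq> all_edges {0..<n}" "books p {0..<n} E0 = {}" "card E0 = T"
  shows "turan_ex n (book_V p) (book_E p) = T"
proof -
  have "copies (book_V p) (book_E p) {0..<n} E = {} \<longleftrightarrow> books p {0..<n} E = {}"
    if "E \<subseteq> all_edges {0..<n}" for E
    using that by (simp add: copies_book_eq simple_graph_iff_all_edges)
  then have Q: "{card E |E. simple_graph {0..<n} E \<and> copies (book_V p) (book_E p) {0..<n} E = {}}
      = card ` {E. E \<subseteq> all_edges {0..<n} \<and> books p {0..<n} E = {}}"
    by (auto simp: simple_graph_iff_all_edges)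
  show ?thesis
    unfolding turan_ex_def Q
  proof (rule Max_eqI)
    show "finite (card ` {E. E \<subseteq> all_edges {0..<n} \<and> books p {0..<n} E = {}})"
      by (auto intro: finite_subset[of _ "Pow (all_edges {0..<n})"] simp: finite_all_edges)
  qed (use assms in auto)
qed

lemma min_copies_book_eqI:
  assumes "2 \<le> p"
    and "\<And>E. E \<subseteq> all_edges {0..<n} \<Longrightarrow> card E = m \<Longrightarrow> c \<le> card (books p {0..<n} E)"
    and "E1 \<subseteq> all_edges {0..<n}" "card E1 = m" "card (books p {0..<n} E1) \<le> c"
  shows "min_copies n m (book_V p) (book_E p) = c"
proof -
  have Q: "{num_copies (book_V p) (book_E p) {0..<n} E |E. simple_graph {0..<n} E \<and> card E = m}
      = (\<lambda>E. card (books p {0..<n} E)) ` {E. E \<subseteq> all_edges {0..<n} \<and> card E = m}"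
  proof -
    have "{num_copies (book_V p) (book_E p) {0..<n} E |E. simple_graph {0..<n} E \<and> card E = m}
      = (\<lambda>E. num_copies (book_V p) (book_E p) {0..<n} E) ` {E. E \<subseteq> all_edges {0..<n} \<and> card E = m}"
      by (simp add: setcompr_eq_image simple_graph_iff_all_edges)
    also have "\<dots> = (\<lambda>E. card (books p {0..<n} E)) ` {E. E \<subseteq> all_edges {0..<n} \<and> card E = m}"
      using assms(1) by (intro image_cong) (simp_all add: num_copies_book_eq_card_books simple_graph_iff_all_edges)
    finally show ?thesis .
  qed
  show ?thesis
    unfolding min_copies_def Q
  proof (rule Min_eqI)
    show "finite ((\<lambda>E. card (books p {0..<n} E)) ` {E. E \<subseteq> all_edges {0..<n} \<and> card E = m})"
      by (auto intro: finite_subset[of _ "Pow (all_edges {0..<n})"] simp: finite_all_edges)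
    show "c \<in> (\<lambda>E. card (books p {0..<n} E)) ` {E. E \<subseteq> all_edges {0..<n} \<and> card E = m}"
      using assms(2)[OF assms(3,4)] assms(3-5) by (auto intro!: image_eqI[of _ _ E1])
  qed (use assms(2) in auto)
qed

lemma turan_ex_book_order_p2:
  assumes "odd p"
  shows "turan_ex (p + 2) (book_V p) (book_E p) = (p + 2 choose 2) - (p + 1) div 2"
proof (rule turan_ex_book_eqI)
  let ?V = "{0..<p + 2}" and ?M = "consecutive_pairs 1 ((p + 1) div 2)"
  have half: "2 * ((p + 1) div 2) = p + 1" using assms by (auto elim!: oddE)
  show "card E \<le> (p + 2 choose 2) - (p + 1) div 2"
    if E: "E \<subseteq> all_edges ?V" "books p ?V E = {}" for E
  proof -
    have "card (universal ?V E) \<le> 1"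
      using card_books_spanning[of ?V E p] E by (simp add: binomial_eq_0_iff)
    then have "(p + 1) div 2 \<le> card (all_edges ?V - E)"
      using card_universal_ge[of ?V E] half by simp
    then show ?thesis using card_non_edges_add[of ?V E] E(1) by simp
  qed
  have M: "?M \<subseteq> all_edges ?V" using half by (intro consecutive_pairs_subset) simp
  then have "universal ?V (all_edges ?V - ?M) = {0}"
    using half by (auto simp: universal_complement Union_consecutive_pairs)
  then show "books p ?V (all_edges ?V - ?M) = {}"
    using card_books_spanning[of ?V "all_edges ?V - ?M" p] finite_books[of ?V "all_edges ?V - ?M" p]
    by (simp add: choose_two)
  show "all_edges ?V - ?M \<subseteq> all_edges ?V" by blast
  show "card (all_edges ?V - ?M) = (p + 2 choose 2) - (p + 1) div 2"
    using card_all_edges_diff[OF _ M] by (simp add: card_consecutive_pairs)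
qed

lemma min_copies_book_order_p2:
  assumes "odd p" "3 \<le> p"
  shows "min_copies (p + 2) ((p + 2 choose 2) - (p + 1) div 2 + 1) (book_V p) (book_E p) = 3"
proof (rule min_copies_book_eqI)
  let ?V = "{0..<p + 2}" and ?M = "consecutive_pairs 1 ((p - 1) div 2)"
  have half: "2 * ((p - 1) div 2) = p - 1" "(p + 1) div 2 = (p - 1) div 2 + 1" using assms by (auto elim!: oddE)
  have M: "?M \<subseteq> all_edges ?V" using half by (intro consecutive_pairs_subset) simp
  have N: "(p - 1) div 2 + 1 \<le> p + 2 choose 2"
    using half_le_choose_two[of "p + 2"] half assms(1) by (auto elim!: oddE)
  show "3 \<le> card (books p ?V E)"
    if E: "E \<subseteq> all_edges ?V" "card E = (p + 2 choose 2) - (p + 1) div 2 + 1" for E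
  proof -
    have "card E + card (all_edges ?V - E) = p + 2 choose 2"
      using card_non_edges_add[of ?V E] E(1) by simp
    then have "card (all_edges ?V - E) = (p - 1) div 2"
      using E(2) half N by linarith
    then have "3 \<le> card (universal ?V E)"
      using card_universal_ge[of ?V E] half assms(2) by simp
    then have "3 choose 2 \<le> card (universal ?V E) choose 2" by (rule binomial_right_mono)
    then show ?thesis using card_books_spanning[of ?V E p] E(1) by (simp add: choose_two)
  qed
  have "universal ?V (all_edges ?V - ?M) = {0, p, p + 1}"
    using half assms(2) M by (auto simp: universal_complement Union_consecutive_pairs)
  then show "card (books p ?V (all_edges ?V - ?M)) \<le> 3"
    using card_books_spanning[of ?V "all_edges ?V - ?M" p] assms(2) by (simp add: choose_two)
  show "all_edges ?V - ?M \<subseteq> all_edges ?V" by blast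
  have "card (all_edges ?V - ?M) = (p + 2 choose 2) - (p - 1) div 2"
    using card_all_edges_diff[OF _ M] by (simp add: card_consecutive_pairs)
  then show "card (all_edges ?V - ?M) = (p + 2 choose 2) - (p + 1) div 2 + 1"
    using N half(2) by linarith
  show "2 \<le> p" using assms(2) by simp
qed

lemma turan_ex_book_order_p3:
  assumes "odd p"
  shows "turan_ex (p + 3) (book_V p) (book_E p) = (p + 3 choose 2) - (p + 3) div 2"
proof (rule turan_ex_book_eqI)
  let ?V = "{0..<p + 3}" and ?M = "consecutive_pairs 0 ((p + 3) div 2)"
  have half: "2 * ((p + 3) div 2) = p + 3" using assms by (auto elim!: oddE)
  show "card E \<le> (p + 3 choose 2) - (p + 3) div 2"
    if E: "E \<subseteq> all_edges ?V" "books p ?V E = {}" for E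
  proof -
    have "\<not> 2 * card (all_edges ?V - E) + 2 \<le> card ?V"
      using card_books_order_p3_ge[of ?V E p] E by auto
    then have "(p + 3) div 2 \<le> card (all_edges ?V - E)" using half by simp
    then show ?thesis using card_non_edges_add[of ?V E] E(1) by simp
  qed
  have M: "?M \<subseteq> all_edges ?V" using half by (intro consecutive_pairs_subset) simp
  then have "universal ?V (all_edges ?V - ?M) = {}"
    using half by (simp add: universal_complement Union_consecutive_pairs)
  then show "books p ?V (all_edges ?V - ?M) = {}"
    using card_books_matching_complement[of ?V "all_edges ?V - ?M" p] M
      finite_books[of ?V "all_edges ?V - ?M" p]
    by (simp add: double_diff pairwise_disjnt_consecutive_pairs choose_two)
  show "all_edges ?V - ?M \<subseteq> all_edges ?V" by blast
  show "card (all_edges ?V - ?M) = (p + 3 choose 2) - (p + 3) div 2"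
    using card_all_edges_diff[OF _ M] by (simp add: card_consecutive_pairs)
qed

lemma min_copies_book_order_p3:
  assumes "odd p" "2 \<le> p"
  shows "min_copies (p + 3) ((p + 3 choose 2) - (p + 3) div 2 + 1) (book_V p) (book_E p) = 3 * (p + 1)"
proof (rule min_copies_book_eqI[OF assms(2)])
  let ?V = "{0..<p + 3}" and ?M = "consecutive_pairs 0 ((p + 1) div 2)"
  have half: "2 * ((p + 1) div 2) = p + 1" "(p + 3) div 2 = (p + 1) div 2 + 1" using assms by (auto elim!: oddE)
  have M: "?M \<subseteq> all_edges ?V" using half by (intro consecutive_pairs_subset) simp
  have N: "(p + 1) div 2 + 1 \<le> p + 3 choose 2"
    using half_le_choose_two[of "p + 3"] half by simp
  show "3 * (p + 1) \<le> card (books p ?V E)"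
    if E: "E \<subseteq> all_edges ?V" "card E = (p + 3 choose 2) - (p + 3) div 2 + 1" for E
  proof -
    have "card (all_edges ?V - E) = (p + 1) div 2"
      using card_non_edges_add[of ?V E] E half N by simp
    then show ?thesis using card_books_order_p3_ge[of ?V E p] E(1) half by simp
  qed
  have "universal ?V (all_edges ?V - ?M) = {p + 1, p + 2}"
    using half M by (auto simp: universal_complement Union_consecutive_pairs)
  then show "card (books p ?V (all_edges ?V - ?M)) \<le> 3 * (p + 1)"
    using card_books_matching_complement[of ?V "all_edges ?V - ?M" p] M
    by (simp add: double_diff pairwise_disjnt_consecutive_pairs choose_two)
  show "all_edges ?V - ?M \<subseteq> all_edges ?V" by blast
  have "card (all_edges ?V - ?M) = (p + 3 choose 2) - (p + 1) div 2"
    using card_all_edges_diff[OF _ M] by (simp add: card_consecutive_pairs)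
  then show "card (all_edges ?V - ?M) = (p + 3 choose 2) - (p + 3) div 2 + 1"
    using N half(2) by linarith
qed

theorem theorem4:
  fixes p :: nat
  assumes "p \<ge> 3" and "odd p"
  shows "min_copies (p+2) (turan_ex (p+2) (book_V p) (book_E p) + 1) (book_V p) (book_E p) = 3
       \<and> min_copies (p+3) (turan_ex (p+3) (book_V p) (book_E p) + 1) (book_V p) (book_E p) = 3 * (p+1)"
proof -
  have "2 \<le> p" using assms(1) by simp
  show ?thesis
    unfolding turan_ex_book_order_p2[OF assms(2)] turan_ex_book_order_p3[OF assms(2)]
    using min_copies_book_order_p2[OF assms(2,1)] min_copies_book_order_p3[OF assms(2) \<open>2 \<le> p\<close>]
    by (rule conjI)
qed

end
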